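(* Let $\mathfrak{M}$ be a non-quasianalytic weight matrix of R-moderate growth. Then $\mathfrak{K}=\mathfrak{K}(\mathfrak{M})$ and $\mathfrak{Q}=\mathfrak{Q}(\mathfrak{M})$ are R-equivalent.
   Context: A weight sequence is $M=(M_k)_{k\ge0}$ with $M_k=\mu_0\cdots\mu_k$, $1=\mu_0\le\mu_1\le\cdots$, $\mu_k\to\infty$; non-quasianalytic if $\sum 1/\mu_k<\infty$. A weight matrix $\mathfrak{M}=\{M^{(\alpha)}:\alpha>0\}$ is a family of weight sequences with $M^{(\alpha)}\le M^{(\beta)}$ for $\alpha\le\beta$; non-quasianalytic if all members are; R-moderate growth: for every $M\in\mathfrak{M}$ there are $N\in\mathfrak{M}$, $C\ge1$ with $M_{j+k}\le C^{j+k}N_jN_k$. For positive sequences $M\preceq N$ means $\sup_{k\ge1}(M_k/N_k)^{1/k}<\infty$; families $\mathfrak{F},\mathfrak{G}$ are R-equivalent if every member of each is $\preceq$ some member of the other. $\omega_M(t)=\sup_k\log(t^kM_0/M_k)$, $\widetilde\omega_M(t)=\omega_M(t)+\log(1+t^2)$. For a non-quasianalytic pre-weight function $\omega$: $\kappa_\omega(t)=\int_1^\infty\omega(ts)s^{-2}ds$, $\varphi^*_\omega(x)=\sup_{y\ge0}(xy-\omega(e^y))$, and (extending $\omega$ evenly) $P_\omega(x+iy)=\frac{|y|}{\pi}\int_{-\infty}^\infty\frac{\omega(t)}{(x-t)^2+y^2}dt$ for $y\ne0$. Derived families: $\kappa_\alpha=\kappa_{\widetilde\omega_{M^{(\alpha)}}}$,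 $K^{(\alpha)}_j=\exp(\varphi^*_{\kappa_\alpha}(j))$ with $\kappa_\alpha$ replaced by an equivalent normalized (vanishing on $[0,1]$) function; $Q^{(\alpha)}_k=\sup_{r>0}r^{k+1/2}\exp(-\tfrac12P_{\widetilde\omega_{M^{(\alpha)}}}(ir))$; $\mathfrak{K}(\mathfrak{M})=\{K^{(\alpha)}\}$, $\mathfrak{Q}(\mathfrak{M})=\{Q^{(\alpha)}\}$. *)

theory Defs
  imports "HOL-Analysis.Analysis"
begin

definition weight_seq :: "(nat \<Rightarrow> real) \<Rightarrow> bool" where
  "weight_seq M \<longleftrightarrow> (\<exists>\<mu>::nat \<Rightarrow> real. \<mu> 0 = 1 \<and> mono \<mu> \<and> filterlim \<mu> at_top sequentially
      \<and> (\<forall>k. M k = (\<Prod>i\<le>k. \<mu> i)))"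

text \<open>Non-quasianalytic: sum of 1/mu k finite, where mu k = M k / M (k-1) for k >= 1
  (and 1/mu 0 = 1); equivalently the series of M k / M (k+1) converges.\<close>
definition nonquasianalytic_seq :: "(nat \<Rightarrow> real) \<Rightarrow> bool" where
  "nonquasianalytic_seq M \<longleftrightarrow> summable (\<lambda>k. M k / M (Suc k))"

definition weight_matrix :: "(real \<Rightarrow> nat \<Rightarrow> real) \<Rightarrow> bool" where
  "weight_matrix MM \<longleftrightarrow> (\<forall>\<alpha>>0. weight_seq (MM \<alpha>)) \<and>
      (\<forall>\<alpha> \<beta>. 0 < \<alpha> \<longrightarrow> \<alpha> \<le> \<beta> \<longrightarrow> (\<forall>k. MM \<alpha> k \<le> MM \<beta> k))"

definition nonquasianalytic_matrix :: "(real \<Rightarrow> nat \<Rightarrow> real) \<Rightarrow> bool" where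
  "nonquasianalytic_matrix MM \<longleftrightarrow> (\<forall>\<alpha>>0. nonquasianalytic_seq (MM \<alpha>))"

definition R_moderate_growth :: "(real \<Rightarrow> nat \<Rightarrow> real) \<Rightarrow> bool" where
  "R_moderate_growth MM \<longleftrightarrow> (\<forall>\<alpha>>0. \<exists>\<beta>>0. \<exists>C\<ge>1. \<forall>j k.
      MM \<alpha> (j + k) \<le> C ^ (j + k) * MM \<beta> j * MM \<beta> k)"

definition seq_preceq :: "(nat \<Rightarrow> real) \<Rightarrow> (nat \<Rightarrow> real) \<Rightarrow> bool" where
  "seq_preceq M N \<longleftrightarrow> bdd_above ((\<lambda>k. (M k / N k) powr (1 / real k)) ` {1..})"

definition R_equivalent :: "(real \<Rightarrow> nat \<Rightarrow> real) \<Rightarrow> (real \<Rightarrow> nat \<Rightarrow> real) \<Rightarrow> bool" where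
  "R_equivalent F G \<longleftrightarrow> (\<forall>\<alpha>>0. \<exists>\<beta>>0. seq_preceq (F \<alpha>) (G \<beta>)) \<and>
      (\<forall>\<alpha>>0. \<exists>\<beta>>0. seq_preceq (G \<alpha>) (F \<beta>))"

definition omega_M :: "(nat \<Rightarrow> real) \<Rightarrow> real \<Rightarrow> real" where
  "omega_M M t = ln (SUP k. t ^ k * M 0 / M k)"

definition omega_tilde :: "(nat \<Rightarrow> real) \<Rightarrow> real \<Rightarrow> real" where
  "omega_tilde M t = omega_M M t + ln (1 + t\<^sup>2)"

definition kappa :: "(real \<Rightarrow> real) \<Rightarrow> real \<Rightarrow> real" where
  "kappa \<omega> t = (LINT s:{1..}|lborel. \<omega> (t * s) / s\<^sup>2)"

definition normalize_wf :: "(real \<Rightarrow> real) \<Rightarrow> real \<Rightarrow> real" where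
  "normalize_wf \<omega> t = (if t \<le> 1 then 0 else \<omega> t - \<omega> 1)"

definition phi_star :: "(real \<Rightarrow> real) \<Rightarrow> real \<Rightarrow> real" where
  "phi_star \<omega> x = (SUP y\<in>{0..}. x * y - \<omega> (exp y))"

text \<open>Poisson integral of the even extension of omega at x + i y (y nonzero).\<close>
definition poissonP :: "(real \<Rightarrow> real) \<Rightarrow> real \<Rightarrow> real \<Rightarrow> real" where
  "poissonP \<omega> x y = \<bar>y\<bar> / pi * (LINT t|lborel. \<omega> \<bar>t\<bar> / ((x - t)\<^sup>2 + y\<^sup>2))"

definition K_family :: "(real \<Rightarrow> nat \<Rightarrow> real) \<Rightarrow> real \<Rightarrow> nat \<Rightarrow> real" where
  "K_family MM \<alpha> j = exp (phi_star (normalize_wf (kappa (omega_tilde (MM \<alpha>)))) (real j))"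

definition Q_family :: "(real \<Rightarrow> nat \<Rightarrow> real) \<Rightarrow> real \<Rightarrow> nat \<Rightarrow> real" where
  "Q_family MM \<alpha> k = (SUP r\<in>{0<..}. r powr (real k + 1/2) * exp (- poissonP (omega_tilde (MM \<alpha>)) 0 r / 2))"

end

theory Submission
  imports Defs
begin

(*
  Write w = omega_tilde M for a member M of the matrix. Splitting the Poisson integral
  P_w(i r) at |t| = r and substituting t = r s compares it with kappa_w:
  kappa_w(r) / (2 pi) <= P_w(i r) <= 2 kappa_w(r), the upper bound also using w <= kappa_w.
  K is the Young conjugate sequence of kappa_w and Q that of P_w(i r) / 2 (up to a factor
  sqrt r), so the upper bound gives K_k <= exp (kappa_w 1) Q_k for the same index alpha.
  The lower bound loses a constant factor in front of kappa_w, and R-moderate growth wins it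
  back: iterating M_(j+k) <= C^(j+k) N_j N_k six times gives 64 omega_N(t) <= omega_M(C t),
  hence 32 kappa_N(r / C) <= kappa_M(r) + c, hence Q^(alpha)_k <= D C^k K^(beta)_k.
  Non-quasianalyticity is what makes kappa finite: omega_M(t) <= sum_k ln+ (t / mu_k), and
  the k-th term contributes at most 4 t / mu_k to the integral defining kappa.
*)

lemma ln_le_two_sqrt:
  fixes x :: real
  assumes "0 < x"
  shows "ln x \<le> 2 * sqrt x"
proof -
  have "ln (sqrt x) \<le> sqrt x - 1" using ln_le_minus_one[of "sqrt x"] assms by simp
  moreover have "ln x = 2 * ln (sqrt x)" using assms by (simp add: ln_sqrt)
  ultimately show ?thesis by simp
qed

lemma powr_minus_two: "0 < (s::real) \<Longrightarrow> s powr (-2) = 1 / s\<^sup>2"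
  by (simp add: powr_minus_divide power2_eq_square powr_mult_base)

lemma powr_nat_plus_half: "0 < (u::real) \<Longrightarrow> u powr (real k + 1/2) = u ^ k * sqrt u"
  by (simp add: powr_add powr_realpow powr_half_sqrt)

lemma sqrt_div_power2:
  fixes s :: real
  assumes "0 < s"
  shows "sqrt s / s\<^sup>2 = s powr (-3/2)"
proof -
  have "s powr (-3/2) * s\<^sup>2 = s powr (-3/2) * s powr 2"
    using assms by (simp add: powr_realpow)
  also have "\<dots> = s powr (-3/2 + 2)" by (rule powr_add[symmetric])
  also have "\<dots> = sqrt s" using assms by (simp add: powr_half_sqrt[symmetric])
  finally show ?thesis using assms by (simp add: divide_simps)
qed

lemma has_bochner_integral_powr_tail:
  fixes a e :: real
  assumes "e < -1" "0 < a"
  shows "has_bochner_integral lborel (\<lambda>s. indicator {a..} s * s powr e) (- (a powr (e + 1)) / (e + 1))"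
proof (rule has_bochner_integral_nn_integral)
  let ?f = "\<lambda>s::real. indicator {a..} s * s powr e"
  have "?f = (\<lambda>s. if s \<in> {a..} then s powr e else 0)" by (auto simp: indicator_def)
  moreover have "((\<lambda>s. s powr e) has_integral - (a powr (e + 1)) / (e + 1)) {a..}"
    using has_integral_powr_to_inf[OF assms] .
  ultimately have "(?f has_integral - (a powr (e + 1)) / (e + 1)) UNIV"
    by (simp only: has_integral_restrict_UNIV)
  then show "(\<integral>\<^sup>+ s. ennreal (?f s) \<partial>lborel) = ennreal (- (a powr (e + 1)) / (e + 1))"
    by (intro nn_integral_has_integral_lborel) auto
  show "0 \<le> - (a powr (e + 1)) / (e + 1)" using assms by (simp add: divide_nonneg_neg)
qed auto

lemma has_bochner_integral_indicator_Icc_const: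
  fixes r c :: real
  assumes "0 \<le> r"
  shows "has_bochner_integral lborel (\<lambda>t. indicator {-r..r} t * c) (2 * r * c)"
proof -
  have "has_bochner_integral lborel (indicator {-r..r}) (measure lborel {-r..r})"
    by (rule has_bochner_integral_real_indicator) (auto simp: emeasure_lborel_Icc_eq)
  moreover have "measure lborel {-r..r} = 2 * r" using assms by (simp add: measure_def emeasure_lborel_Icc_eq)
  ultimately show ?thesis using has_bochner_integral_mult_left[of c] by simp
qed

lemma borel_measurable_mono_on_max_0:
  fixes f :: "real \<Rightarrow> real"
  assumes "mono_on {0..} f"
  shows "(\<lambda>t. f (max 0 t)) \<in> borel_measurable borel"
proof (intro borel_measurable_mono monoI)
  fix x y :: real
  assume "x \<le> y"
  then show "f (max 0 x) \<le> f (max 0 y)" by (intro mono_onD[OF assms]) auto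
qed

section \<open>Weight functions: kappa, the Poisson integral and Young conjugates\<close>

definition kappa_integrand :: "(real \<Rightarrow> real) \<Rightarrow> real \<Rightarrow> real \<Rightarrow> real" where
  "kappa_integrand \<omega> r s = indicator {1..} s * (\<omega> (r * s) / s\<^sup>2)"

definition K_seq :: "(real \<Rightarrow> real) \<Rightarrow> nat \<Rightarrow> real" where
  "K_seq \<omega> k = exp (phi_star (normalize_wf (kappa \<omega>)) (real k))"

definition poisson_term :: "(real \<Rightarrow> real) \<Rightarrow> nat \<Rightarrow> real \<Rightarrow> real" where
  "poisson_term \<omega> k r = r powr (real k + 1/2) * exp (- poissonP \<omega> 0 r / 2)"

definition Q_seq :: "(real \<Rightarrow> real) \<Rightarrow> nat \<Rightarrow> real" where
  "Q_seq \<omega> k = (SUP r\<in>{0<..}. poisson_term \<omega> k r)"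

lemma kappa_eq_integral: "kappa \<omega> r = (\<integral>s. kappa_integrand \<omega> r s \<partial>lborel)"
  by (simp add: kappa_def kappa_integrand_def set_lebesgue_integral_def)

lemma poissonP_imaginary_axis:
  "0 < r \<Longrightarrow> poissonP \<omega> 0 r = r / pi * (\<integral>t. \<omega> \<bar>t\<bar> / (t\<^sup>2 + r\<^sup>2) \<partial>lborel)"
  by (simp add: poissonP_def)

(* Only the values of omega on [0, oo) matter: kappa evaluates it at r s with r > 0, s >= 1,
   and poissonP at |t|. *)
locale nonquasianalytic_weight_fun =
  fixes \<omega> :: "real \<Rightarrow> real"
  assumes mono_on_nonneg: "mono_on {0..} \<omega>"
    and nonneg: "0 \<le> t \<Longrightarrow> 0 \<le> \<omega> t"
    and integrable_kappa_integrand: "0 < r \<Longrightarrow> integrable lborel (kappa_integrand \<omega> r)"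
    and ln_growth: "\<exists>c. \<forall>t>0. real n * ln t - c \<le> \<omega> t"
begin

lemma mono_nonneg: "0 \<le> x \<Longrightarrow> x \<le> y \<Longrightarrow> \<omega> x \<le> \<omega> y"
  by (rule mono_onD[OF mono_on_nonneg]) auto

lemma borel_measurable_omega_abs [measurable]: "(\<lambda>t. \<omega> \<bar>t\<bar>) \<in> borel_measurable borel"
proof -
  have "(\<lambda>t::real. \<bar>t\<bar>) \<in> borel_measurable borel" by simp
  from measurable_compose[OF this borel_measurable_mono_on_max_0[OF mono_on_nonneg]]
  show ?thesis by simp
qed

lemma kappa_integrand_nonneg: "0 \<le> r \<Longrightarrow> 0 \<le> kappa_integrand \<omega> r s"
  by (simp add: kappa_integrand_def indicator_def nonneg)

lemma kappa_nonneg: "0 \<le> r \<Longrightarrow> 0 \<le> kappa \<omega> r"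
  by (simp add: kappa_eq_integral kappa_integrand_nonneg)

lemma le_kappa:
  assumes r: "0 < r"
  shows "\<omega> r \<le> kappa \<omega> r"
proof -
  have "has_bochner_integral lborel (\<lambda>s. indicator {1..} s * (s::real) powr (-2)) 1"
    using has_bochner_integral_powr_tail[of "-2" 1] by simp
  then have "has_bochner_integral lborel (\<lambda>s. \<omega> r * (indicator {1..} s * s powr (-2))) (\<omega> r)"
    using has_bochner_integral_mult_right by fastforce
  then have lower: "integrable lborel (\<lambda>s. \<omega> r * (indicator {1..} s * s powr (-2)))"
    "(\<integral>s. \<omega> r * (indicator {1..} s * s powr (-2)) \<partial>lborel) = \<omega> r"
    by (simp_all add: has_bochner_integral_iff)
  have "\<omega> r * (indicator {1..} s * s powr (-2)) \<le> kappa_integrand \<omega> r s" for s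
  proof (cases "1 \<le> s")
    case True
    then have "\<omega> r / s\<^sup>2 \<le> \<omega> (r * s) / s\<^sup>2"
      using r mono_nonneg[of r "r * s"] by (intro divide_right_mono) auto
    then show ?thesis using True by (simp add: kappa_integrand_def powr_minus_two)
  qed (simp add: kappa_integrand_def)
  then have "(\<integral>s. \<omega> r * (indicator {1..} s * s powr (-2)) \<partial>lborel) \<le> kappa \<omega> r"
    unfolding kappa_eq_integral by (rule integral_mono[OF lower(1) integrable_kappa_integrand[OF r]])
  then show ?thesis by (simp only: lower(2))
qed

lemma has_bochner_integral_kappa_integrand_rescaled:
  assumes r: "0 < r"
  shows "has_bochner_integral lborel (\<lambda>t. kappa_integrand \<omega> r (t / r)) (r * kappa \<omega> r)"
    and "has_bochner_integral lborel (\<lambda>t. kappa_integrand \<omega> r (- t / r)) (r * kappa \<omega> r)"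
proof -
  have "has_bochner_integral lborel (kappa_integrand \<omega> r) (kappa \<omega> r)"
    using integrable_kappa_integrand[OF r] by (simp add: kappa_eq_integral has_bochner_integral_iff)
  then have "has_bochner_integral lborel (\<lambda>t. kappa_integrand \<omega> r (0 + (c / r) * t)) (kappa \<omega> r /\<^sub>R \<bar>c / r\<bar>)"
    if "\<bar>c\<bar> = 1" for c
    using lborel_has_bochner_integral_real_affine_iff[where c="c / r" and t=0 and f="kappa_integrand \<omega> r"
        and x="kappa \<omega> r"] r that
    by auto
  from this[of 1] this[of "-1"] r
  show "has_bochner_integral lborel (\<lambda>t. kappa_integrand \<omega> r (t / r)) (r * kappa \<omega> r)"
    and "has_bochner_integral lborel (\<lambda>t. kappa_integrand \<omega> r (- t / r)) (r * kappa \<omega> r)"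
    by simp_all
qed

lemma poisson_integrand_nonneg: "0 \<le> \<omega> \<bar>t\<bar> / (t\<^sup>2 + r\<^sup>2)"
  by (simp add: nonneg)

(* For |t| > r we have t^2 + r^2 >= t^2, and t = +-r s turns omega |t| / t^2 into
   kappa_integrand omega r s / r^2. *)
lemma poisson_integrand_le:
  assumes r: "0 < r"
  shows "\<omega> \<bar>t\<bar> / (t\<^sup>2 + r\<^sup>2) \<le> indicator {-r..r} t * (\<omega> r / r\<^sup>2)
           + (kappa_integrand \<omega> r (t / r) + kappa_integrand \<omega> r (- t / r)) / r\<^sup>2"
proof -
  have tail: "\<omega> \<bar>t\<bar> / (t\<^sup>2 + r\<^sup>2) \<le> kappa_integrand \<omega> r (c * t / r) / r\<^sup>2"
    if c: "\<bar>c\<bar> = 1" and "r < c * t" for c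
  proof -
    have ct: "\<bar>t\<bar> = c * t" "t\<^sup>2 = (c * t)\<^sup>2" using c \<open>r < c * t\<close> r
      by (auto simp: abs_if power2_eq_square split: if_splits)
    have "\<omega> \<bar>t\<bar> / (t\<^sup>2 + r\<^sup>2) \<le> \<omega> (c * t) / (c * t)\<^sup>2"
      unfolding ct using \<open>r < c * t\<close> r by (intro frac_le nonneg) auto
    also have "\<dots> = kappa_integrand \<omega> r (c * t / r) / r\<^sup>2"
      using \<open>r < c * t\<close> r by (simp add: kappa_integrand_def indicator_def field_simps)
    finally show ?thesis .
  qed
  have "0 \<le> kappa_integrand \<omega> r (t / r) / r\<^sup>2" "0 \<le> kappa_integrand \<omega> r (- t / r) / r\<^sup>2"
    and "0 \<le> indicator {-r..r} t * (\<omega> r / r\<^sup>2)"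
    using r by (simp_all add: kappa_integrand_nonneg nonneg)
  moreover consider "\<bar>t\<bar> \<le> r" | "r < t" | "r < - t" by linarith
  then have "\<omega> \<bar>t\<bar> / (t\<^sup>2 + r\<^sup>2) \<le> indicator {-r..r} t * (\<omega> r / r\<^sup>2)
      \<or> \<omega> \<bar>t\<bar> / (t\<^sup>2 + r\<^sup>2) \<le> kappa_integrand \<omega> r (t / r) / r\<^sup>2
      \<or> \<omega> \<bar>t\<bar> / (t\<^sup>2 + r\<^sup>2) \<le> kappa_integrand \<omega> r (- t / r) / r\<^sup>2"
  proof cases
    case 1
    then have "\<omega> \<bar>t\<bar> / (t\<^sup>2 + r\<^sup>2) \<le> \<omega> r / r\<^sup>2"
      using r by (intro frac_le mono_nonneg nonneg) auto
    then show ?thesis using 1 by (simp add: indicator_def abs_le_iff)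
  qed (use tail[of 1] tail[of "-1"] in auto)
  ultimately show ?thesis by (smt (verit) add_divide_distrib)
qed

lemma integrable_poisson_integrand:
  assumes r: "0 < r"
  shows "integrable lborel (\<lambda>t. \<omega> \<bar>t\<bar> / (t\<^sup>2 + r\<^sup>2))"
proof (rule Bochner_Integration.integrable_bound)
  show "integrable lborel (\<lambda>t. indicator {-r..r} t * (\<omega> r / r\<^sup>2)
           + (kappa_integrand \<omega> r (t / r) + kappa_integrand \<omega> r (- t / r)) / r\<^sup>2)"
    using has_bochner_integral_indicator_Icc_const[of r "\<omega> r / r\<^sup>2"]
      has_bochner_integral_kappa_integrand_rescaled[OF r] r
    by (auto simp: has_bochner_integral_iff)
  show "AE t in lborel. norm (\<omega> \<bar>t\<bar> / (t\<^sup>2 + r\<^sup>2)) \<le> norm (indicator {-r..r} t * (\<omega> r / r\<^sup>2)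
           + (kappa_integrand \<omega> r (t / r) + kappa_integrand \<omega> r (- t / r)) / r\<^sup>2)"
    using poisson_integrand_le[OF r] poisson_integrand_nonneg by (intro AE_I2) (smt (verit) real_norm_def)
qed simp

lemma poissonP_le_kappa:
  assumes r: "0 < r"
  shows "poissonP \<omega> 0 r \<le> 2 * kappa \<omega> r"
proof -
  have "has_bochner_integral lborel (\<lambda>t. indicator {-r..r} t * (\<omega> r / r\<^sup>2)
           + (kappa_integrand \<omega> r (t / r) + kappa_integrand \<omega> r (- t / r)) / r\<^sup>2)
          (2 * r * (\<omega> r / r\<^sup>2) + (r * kappa \<omega> r + r * kappa \<omega> r) / r\<^sup>2)"
    using r by (intro has_bochner_integral_add has_bochner_integral_divide_zero
        has_bochner_integral_indicator_Icc_const has_bochner_integral_kappa_integrand_rescaled) auto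
  then have "(\<integral>t. \<omega> \<bar>t\<bar> / (t\<^sup>2 + r\<^sup>2) \<partial>lborel)
      \<le> 2 * r * (\<omega> r / r\<^sup>2) + (r * kappa \<omega> r + r * kappa \<omega> r) / r\<^sup>2"
    unfolding has_bochner_integral_iff
    using integral_mono[OF integrable_poisson_integrand[OF r] _ poisson_integrand_le[OF r]] by auto
  also have "\<dots> = 2 * (\<omega> r + kappa \<omega> r) / r" using r by (simp add: power2_eq_square field_simps)
  finally have "poissonP \<omega> 0 r \<le> r / pi * (2 * (\<omega> r + kappa \<omega> r) / r)"
    unfolding poissonP_imaginary_axis[OF r] using r by (intro mult_left_mono) auto
  also have "\<dots> = 2 * (\<omega> r + kappa \<omega> r) / pi" using r by simp
  also have "\<dots> \<le> 4 * kappa \<omega> r / pi"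
    using le_kappa[OF r] by (intro divide_right_mono) auto
  also have "\<dots> \<le> 2 * kappa \<omega> r"
  proof -
    have "2 * kappa \<omega> r \<le> pi * kappa \<omega> r"
      using kappa_nonneg[of r] r pi_gt3 by (intro mult_right_mono) auto
    then show ?thesis by (simp add: field_simps)
  qed
  finally show ?thesis .
qed

lemma kappa_le_poissonP:
  assumes r: "0 < r"
  shows "kappa \<omega> r / (2 * pi) \<le> poissonP \<omega> 0 r"
proof -
  have le: "kappa_integrand \<omega> r (t / r) / (2 * r\<^sup>2) \<le> \<omega> \<bar>t\<bar> / (t\<^sup>2 + r\<^sup>2)" for t
  proof (cases "r \<le> t")
    case True
    then have "kappa_integrand \<omega> r (t / r) / (2 * r\<^sup>2) = \<omega> t / (2 * t\<^sup>2)"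
      using r by (simp add: kappa_integrand_def indicator_def field_simps)
    also have "\<dots> \<le> \<omega> \<bar>t\<bar> / (t\<^sup>2 + r\<^sup>2)"
      using True r power_mono[of r t 2] by (intro frac_le nonneg add_pos_pos) auto
    finally show ?thesis .
  qed (use r in \<open>simp add: kappa_integrand_def indicator_def field_simps nonneg\<close>)
  have hb: "has_bochner_integral lborel (\<lambda>t. kappa_integrand \<omega> r (t / r) / (2 * r\<^sup>2))
      (r * kappa \<omega> r / (2 * r\<^sup>2))"
    using has_bochner_integral_kappa_integrand_rescaled(1)[OF r] by (rule has_bochner_integral_divide_zero)
  have "(\<integral>t. kappa_integrand \<omega> r (t / r) / (2 * r\<^sup>2) \<partial>lborel) \<le> (\<integral>t. \<omega> \<bar>t\<bar> / (t\<^sup>2 + r\<^sup>2) \<partial>lborel)"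
    using hb integrable_poisson_integrand[OF r] le by (intro integral_mono) (auto simp: has_bochner_integral_iff)
  then have "r * kappa \<omega> r / (2 * r\<^sup>2) \<le> (\<integral>t. \<omega> \<bar>t\<bar> / (t\<^sup>2 + r\<^sup>2) \<partial>lborel)"
    by (simp only: has_bochner_integral_integral_eq[OF hb])
  then have "r / pi * (r * kappa \<omega> r / (2 * r\<^sup>2)) \<le> poissonP \<omega> 0 r"
    unfolding poissonP_imaginary_axis[OF r] using r by (intro mult_left_mono) auto
  then show ?thesis using r by (simp add: power2_eq_square field_simps)
qed

lemma normalize_kappa_exp:
  "0 \<le> y \<Longrightarrow> normalize_wf (kappa \<omega>) (exp y) = kappa \<omega> (exp y) - kappa \<omega> 1"
  by (simp add: normalize_wf_def)

lemma bdd_above_phi_star: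
  "bdd_above ((\<lambda>y. real k * y - normalize_wf (kappa \<omega>) (exp y)) ` {0..})"
proof -
  obtain c where c: "\<And>t. 0 < t \<Longrightarrow> real k * ln t - c \<le> \<omega> t" using ln_growth by blast
  have "real k * y - normalize_wf (kappa \<omega>) (exp y) \<le> c + kappa \<omega> 1" if "0 \<le> y" for y
    using c[of "exp y"] le_kappa[of "exp y"] that by (simp add: normalize_kappa_exp)
  then show ?thesis by (intro bdd_aboveI2) auto
qed

lemma phi_star_ge:
  "0 \<le> y \<Longrightarrow> real k * y - kappa \<omega> (exp y) + kappa \<omega> 1 \<le> phi_star (normalize_wf (kappa \<omega>)) (real k)"
  unfolding phi_star_def using cSUP_upper[OF _ bdd_above_phi_star, of y k]
  by (simp add: normalize_kappa_exp)

lemma K_seq_ge_one: "1 \<le> K_seq \<omega> k"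
  using phi_star_ge[of 0 k] by (simp add: K_seq_def)

lemma power_mult_exp_kappa_le_K_seq:
  assumes u: "0 < u"
  shows "u ^ k * exp (- kappa \<omega> u) \<le> K_seq \<omega> k"
proof (cases "u \<le> 1")
  case True
  then have "u ^ k * exp (- kappa \<omega> u) \<le> 1 * 1"
    using u kappa_nonneg[of u] by (intro mult_mono power_le_one) auto
  then show ?thesis using K_seq_ge_one[of k] by simp
next
  case False
  have "exp (real k * ln u - kappa \<omega> u + kappa \<omega> 1) \<le> K_seq \<omega> k"
    using phi_star_ge[of "ln u" k] False u by (simp add: K_seq_def)
  moreover have "exp (real k * ln u - kappa \<omega> u + kappa \<omega> 1) = u ^ k * exp (- kappa \<omega> u) * exp (kappa \<omega> 1)"
    using u by (simp add: exp_add exp_diff exp_of_nat_mult exp_minus field_simps)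
  moreover have "u ^ k * exp (- kappa \<omega> u) \<le> u ^ k * exp (- kappa \<omega> u) * exp (kappa \<omega> 1)"
    using u kappa_nonneg[of 1] by (simp add: mult_le_cancel_left1 less_le_not_le)
  ultimately show ?thesis by linarith
qed

lemma Q_seq_ge: "bdd_above (poisson_term \<omega> k ` {0<..}) \<Longrightarrow> 0 < u \<Longrightarrow> poisson_term \<omega> k u \<le> Q_seq \<omega> k"
  unfolding Q_seq_def by (intro cSUP_upper) auto

lemma Q_seq_le: "(\<And>r. 0 < r \<Longrightarrow> poisson_term \<omega> k r \<le> B) \<Longrightarrow> Q_seq \<omega> k \<le> B"
  unfolding Q_seq_def by (intro cSUP_least) auto

lemma Q_seq_pos: "bdd_above (poisson_term \<omega> k ` {0<..}) \<Longrightarrow> 0 < Q_seq \<omega> k"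
  using Q_seq_ge[of k 1] by (simp add: poisson_term_def) (meson exp_gt_zero less_le_trans)

lemma K_seq_le_Q_seq:
  assumes bdd: "bdd_above (poisson_term \<omega> k ` {0<..})"
  shows "K_seq \<omega> k \<le> exp (kappa \<omega> 1) * Q_seq \<omega> k"
proof -
  have Q_pos: "0 < Q_seq \<omega> k" using Q_seq_pos[OF bdd] .
  have "real k * y - normalize_wf (kappa \<omega>) (exp y) \<le> kappa \<omega> 1 + ln (Q_seq \<omega> k)" if y: "0 \<le> y" for y
  proof -
    define u where "u = exp y"
    have u: "1 \<le> u" using y by (simp add: u_def)
    have "u ^ k \<le> u powr (real k + 1/2)"
      using u by (simp add: powr_nat_plus_half mult_le_cancel_left1)
    moreover have "exp (- kappa \<omega> u) \<le> exp (- poissonP \<omega> 0 u / 2)"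
      using poissonP_le_kappa[of u] u by simp
    ultimately have "u ^ k * exp (- kappa \<omega> u) \<le> poisson_term \<omega> k u"
      unfolding poisson_term_def using u by (intro mult_mono) auto
    also have "\<dots> \<le> Q_seq \<omega> k" using Q_seq_ge[OF bdd] u by simp
    finally have "exp (real k * y - kappa \<omega> u) \<le> Q_seq \<omega> k"
      by (simp add: u_def exp_diff exp_of_nat_mult exp_of_nat2_mult exp_minus field_simps)
    then show ?thesis
      using Q_pos y by (simp add: u_def normalize_kappa_exp ln_ge_iff)
  qed
  then have "phi_star (normalize_wf (kappa \<omega>)) (real k) \<le> kappa \<omega> 1 + ln (Q_seq \<omega> k)"
    unfolding phi_star_def by (intro cSUP_least) auto
  then have "K_seq \<omega> k \<le> exp (kappa \<omega> 1 + ln (Q_seq \<omega> k))" by (simp add: K_seq_def)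
  then show ?thesis using Q_pos by (simp add: exp_add)
qed

end

lemma kappa_compare:
  assumes \<omega>: "nonquasianalytic_weight_fun \<omega>" and \<sigma>: "nonquasianalytic_weight_fun \<sigma>" and C: "0 < C"
    and le: "\<And>x. 0 \<le> x \<Longrightarrow> a * \<sigma> (x / C) \<le> \<omega> x + c" and r: "0 < r"
  shows "a * kappa \<sigma> (r / C) - c \<le> kappa \<omega> r"
proof -
  have hb: "has_bochner_integral lborel (\<lambda>s. a * kappa_integrand \<sigma> (r / C) s - c * (indicator {1..} s * s powr (-2)))
      (a * kappa \<sigma> (r / C) - c * 1)"
    using nonquasianalytic_weight_fun.integrable_kappa_integrand[OF \<sigma>, of "r / C"]
      has_bochner_integral_powr_tail[of "-2" 1] r C
    by (intro has_bochner_integral_diff has_bochner_integral_mult_right)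
      (auto simp: has_bochner_integral_iff kappa_eq_integral)
  have "a * kappa_integrand \<sigma> (r / C) s - c * (indicator {1..} s * s powr (-2)) \<le> kappa_integrand \<omega> r s" for s
  proof (cases "1 \<le> s")
    case True
    then have "(a * \<sigma> (r * s / C) - c) / s\<^sup>2 \<le> \<omega> (r * s) / s\<^sup>2"
      using le[of "r * s"] r by (intro divide_right_mono) auto
    then show ?thesis using True by (simp add: kappa_integrand_def powr_minus_two diff_divide_distrib)
  qed (simp add: kappa_integrand_def)
  then have "(\<integral>s. a * kappa_integrand \<sigma> (r / C) s - c * (indicator {1..} s * s powr (-2)) \<partial>lborel)
      \<le> kappa \<omega> r"
    unfolding kappa_eq_integral using hb nonquasianalytic_weight_fun.integrable_kappa_integrand[OF \<omega> r]
    by (intro integral_mono) (auto simp: has_bochner_integral_iff)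
  then show ?thesis by (simp add: has_bochner_integral_integral_eq[OF hb])
qed

(* By kappa_le_poissonP, P/2 >= kappa_omega / 16 = kappa_omega / 32 + kappa_omega / 32:
   the first half dominates kappa_sigma (r / C) by hypothesis, the second absorbs the extra
   factor sqrt r of poisson_term because kappa_omega r >= omega r >= 16 ln r - l. *)
lemma poisson_term_le_K_seq:
  assumes \<omega>: "nonquasianalytic_weight_fun \<omega>" and \<sigma>: "nonquasianalytic_weight_fun \<sigma>" and C: "0 < C"
    and le: "\<And>r. 0 < r \<Longrightarrow> 32 * kappa \<sigma> (r / C) - c \<le> kappa \<omega> r"
  shows "\<exists>D>0. \<forall>k r. 0 < r \<longrightarrow> poisson_term \<omega> k r \<le> D * C ^ k * K_seq \<sigma> k"
proof -
  interpret \<omega>: nonquasianalytic_weight_fun \<omega> by (fact \<omega>)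
  interpret \<sigma>: nonquasianalytic_weight_fun \<sigma> by (fact \<sigma>)
  obtain l where l: "\<And>t. 0 < t \<Longrightarrow> real 16 * ln t - l \<le> \<omega> t" using \<omega>.ln_growth by blast
  define D where "D = exp (c / 32 + l / 32)"
  have "poisson_term \<omega> k r \<le> D * C ^ k * K_seq \<sigma> k" if r: "0 < r" for k r
  proof -
    have "kappa \<omega> r / 8 \<le> kappa \<omega> r / (2 * pi)"
      using \<omega>.kappa_nonneg[of r] r pi_less_4 by (intro divide_left_mono) auto
    then have "- poissonP \<omega> 0 r / 2 \<le> - kappa \<sigma> (r / C) + (c / 32 + l / 32) - ln r / 2"
      using \<omega>.kappa_le_poissonP[OF r] \<omega>.le_kappa[OF r] l[OF r] le[OF r] by simp
    then have "exp (- poissonP \<omega> 0 r / 2) \<le> exp (- kappa \<sigma> (r / C) + (c / 32 + l / 32) - ln r / 2)"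
      by simp
    also have "\<dots> = exp (- kappa \<sigma> (r / C)) * D / sqrt r"
    proof -
      have "exp (ln r / 2) = sqrt r" using r by (simp add: ln_sqrt[symmetric])
      then show ?thesis unfolding D_def by (simp only: exp_add exp_diff)
    qed
    finally have "exp (- poissonP \<omega> 0 r / 2) \<le> exp (- kappa \<sigma> (r / C)) * D / sqrt r" .
    then have "poisson_term \<omega> k r \<le> r ^ k * sqrt r * (exp (- kappa \<sigma> (r / C)) * D / sqrt r)"
      unfolding poisson_term_def powr_nat_plus_half[OF r] using r by (intro mult_left_mono) auto
    also have "\<dots> = D * C ^ k * ((r / C) ^ k * exp (- kappa \<sigma> (r / C)))"
      using r C by (simp add: field_simps)
    also have "\<dots> \<le> D * C ^ k * K_seq \<sigma> k"
      using \<sigma>.power_mult_exp_kappa_le_K_seq[of "r / C" k] r C by (simp add: D_def)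
    finally show ?thesis .
  qed
  moreover have "0 < D" by (simp add: D_def)
  ultimately show ?thesis by blast
qed

section \<open>Non-quasianalytic weight sequences\<close>

definition ln_plus :: "real \<Rightarrow> real" where
  "ln_plus x = max 0 (ln x)"

definition tail_bump :: "real \<Rightarrow> real \<Rightarrow> real" where
  "tail_bump a s = indicator {a..} s * s powr (-3/2) / sqrt a"

lemma ln_plus_nonneg: "0 \<le> ln_plus x"
  by (simp add: ln_plus_def)

lemma ln_plus_le: "0 < x \<Longrightarrow> ln_plus x \<le> x"
  using ln_le_minus_one[of x] by (simp add: ln_plus_def)

lemma tail_bump_nonneg: "0 \<le> a \<Longrightarrow> 0 \<le> tail_bump a s"
  by (simp add: tail_bump_def indicator_def)

lemma has_bochner_integral_tail_bump:
  assumes a: "0 < a"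
  shows "has_bochner_integral lborel (tail_bump a) (2 / a)"
proof -
  have "has_bochner_integral lborel (\<lambda>s. indicator {a..} s * s powr (-3/2) / sqrt a)
      (- (a powr (-3/2 + 1)) / (-3/2 + 1) / sqrt a)"
    using has_bochner_integral_powr_tail[of "-3/2" a] a by (intro has_bochner_integral_divide_zero) auto
  moreover have "- (a powr (-3/2 + 1)) / (-3/2 + 1) / sqrt a = 2 / a"
    using a by (simp add: powr_minus_divide powr_half_sqrt)
  ultimately show ?thesis by (simp add: tail_bump_def [abs_def])
qed

lemma ln_plus_div_power2_le_tail_bump:
  assumes a: "0 < a" and s: "0 < s"
  shows "ln_plus (s / a) / s\<^sup>2 \<le> 2 * tail_bump a s"
proof (cases "a \<le> s")
  case True
  have "ln_plus (s / a) \<le> 2 * sqrt (s / a)"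
    using ln_le_two_sqrt[of "s / a"] a s by (simp add: ln_plus_def)
  then have "ln_plus (s / a) / s\<^sup>2 \<le> 2 * sqrt (s / a) / s\<^sup>2"
    by (rule divide_right_mono) simp
  also have "\<dots> = 2 * (sqrt s / s\<^sup>2) / sqrt a"
    by (simp add: real_sqrt_divide)
  finally have "ln_plus (s / a) / s\<^sup>2 \<le> 2 * (sqrt s / s\<^sup>2) / sqrt a" .
  then show ?thesis using True s by (simp add: tail_bump_def sqrt_div_power2)
next
  case False
  then have "ln (s / a) \<le> 0" using a s by simp
  then show ?thesis using False by (simp add: ln_plus_def tail_bump_def)
qed

lemma ln_one_plus_power2_le_tail_bump:
  assumes r: "0 < r" and s: "1 \<le> s"
  shows "ln (1 + (r * s)\<^sup>2) / s\<^sup>2 \<le> 4 * sqrt (1 + r) * tail_bump 1 s"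
proof -
  have "1 \<le> s\<^sup>2" "0 \<le> 2 * r * s\<^sup>2" using s r by simp_all
  then have "1 + (r * s)\<^sup>2 \<le> ((1 + r) * s)\<^sup>2" by (simp add: power2_eq_square algebra_simps)
  then have "ln (1 + (r * s)\<^sup>2) \<le> ln (((1 + r) * s)\<^sup>2)"
    using r s by (subst ln_le_cancel_iff) (auto intro: add_pos_nonneg)
  also have "\<dots> = 2 * ln ((1 + r) * s)" using r s by (simp add: ln_realpow)
  also have "\<dots> \<le> 4 * (sqrt (1 + r) * sqrt s)"
    using ln_le_two_sqrt[of "(1 + r) * s"] r s by (simp add: real_sqrt_mult mult.commute)
  finally have "ln (1 + (r * s)\<^sup>2) / s\<^sup>2 \<le> 4 * sqrt (1 + r) * (sqrt s / s\<^sup>2)"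
    by (simp add: divide_right_mono)
  then show ?thesis using s by (simp add: tail_bump_def sqrt_div_power2)
qed

lemma omega_M_le_omega_tilde: "omega_M M x \<le> omega_tilde M x"
  by (simp add: omega_tilde_def)

locale nonquasianalytic_weight_seq =
  fixes M :: "nat \<Rightarrow> real" and \<mu> :: "nat \<Rightarrow> real"
  assumes mu_0: "\<mu> 0 = 1" and mono_mu: "mono \<mu>" and mu_tendsto: "filterlim \<mu> at_top sequentially"
    and M_eq_prod: "M k = (\<Prod>i\<le>k. \<mu> i)"
    and summable_quotient: "summable (\<lambda>k. M k / M (Suc k))"
begin

lemma mu_ge_one: "1 \<le> \<mu> i"
  using mono_mu mu_0 by (metis le0 monoD)

lemma mu_pos: "0 < \<mu> i"
  using mu_ge_one[of i] by simp

lemma M_Suc: "M (Suc k) = M k * \<mu> (Suc k)"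
  by (simp add: M_eq_prod)

lemma M_0: "M 0 = 1"
  by (simp add: M_eq_prod mu_0)

lemma M_ge_one: "1 \<le> M k"
  unfolding M_eq_prod by (rule prod_ge_1) (use mu_ge_one in auto)

lemma M_pos: "0 < M k"
  using M_ge_one[of k] by simp

lemma M_quotient: "M k / M (Suc k) = 1 / \<mu> (Suc k)"
  using M_pos[of k] by (simp add: M_Suc)

lemma summable_ln_plus:
  assumes x: "0 < x"
  shows "summable (\<lambda>i. ln_plus (x / \<mu> (Suc i)))"
proof (rule summable_comparison_test)
  show "\<exists>N. \<forall>n\<ge>N. norm (ln_plus (x / \<mu> (Suc n))) \<le> x * (M n / M (Suc n))"
    using x mu_pos ln_plus_le[of "x / \<mu> (Suc _)"] by (simp add: M_quotient ln_plus_nonneg)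
  show "summable (\<lambda>n. x * (M n / M (Suc n)))" using summable_quotient by (rule summable_mult)
qed

lemma ln_power_div_M:
  assumes x: "0 < x"
  shows "ln (x ^ n / M n) = (\<Sum>i<n. ln (x / \<mu> (Suc i)))"
proof (induction n)
  case (Suc n)
  have "x ^ Suc n / M (Suc n) = (x ^ n / M n) * (x / \<mu> (Suc n))" by (simp add: M_Suc)
  then have "ln (x ^ Suc n / M (Suc n)) = ln (x ^ n / M n) + ln (x / \<mu> (Suc n))"
    using x M_pos[of n] mu_pos[of "Suc n"] by (simp only: ln_mult_pos divide_pos_pos zero_less_power)
  then show ?case using Suc by simp
qed (simp add: M_0)

lemma power_div_M_le:
  assumes x: "0 < x"
  shows "x ^ n / M n \<le> exp (\<Sum>i. ln_plus (x / \<mu> (Suc i)))"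
proof -
  have "ln (x ^ n / M n) \<le> (\<Sum>i<n. ln_plus (x / \<mu> (Suc i)))"
    unfolding ln_power_div_M[OF x] by (intro sum_mono) (simp add: ln_plus_def)
  also have "\<dots> \<le> (\<Sum>i. ln_plus (x / \<mu> (Suc i)))"
    using summable_ln_plus[OF x] by (intro sum_le_suminf) (auto simp: ln_plus_nonneg)
  finally have "exp (ln (x ^ n / M n)) \<le> exp (\<Sum>i. ln_plus (x / \<mu> (Suc i)))" by simp
  then show ?thesis using x M_pos[of n] by simp
qed

lemma bdd_above_omega_terms:
  assumes x: "0 \<le> x"
  shows "bdd_above (range (\<lambda>k. x ^ k * M 0 / M k))"
proof (cases "x = 0")
  case True
  have "0 ^ k / M k \<le> 1" for k using M_ge_one[of k] by (cases k) auto
  then show ?thesis using True by (intro bdd_aboveI2[where M=1]) (simp add: M_0)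
next
  case False
  then show ?thesis
    using power_div_M_le x by (intro bdd_aboveI2[where M="exp (\<Sum>i. ln_plus (x / \<mu> (Suc i)))"]) (simp add: M_0)
qed

lemma one_le_omega_sup: "0 \<le> x \<Longrightarrow> 1 \<le> (SUP k. x ^ k * M 0 / M k)"
  using cSUP_upper[OF UNIV_I bdd_above_omega_terms, of x 0] by (simp add: M_0)

lemma omega_M_nonneg: "0 \<le> x \<Longrightarrow> 0 \<le> omega_M M x"
  unfolding omega_M_def using one_le_omega_sup by simp

lemma omega_M_ge:
  assumes x: "0 < x"
  shows "real n * ln x - ln (M n) \<le> omega_M M x"
proof -
  have "x ^ n / M n \<le> (SUP k. x ^ k * M 0 / M k)"
    using cSUP_upper[OF UNIV_I bdd_above_omega_terms, of x n] x by (simp add: M_0)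
  then have "ln (x ^ n / M n) \<le> omega_M M x"
    unfolding omega_M_def using x M_pos[of n] one_le_omega_sup[of x] by simp
  then show ?thesis using x M_pos[of n] by (simp add: ln_div ln_realpow)
qed

lemma omega_M_le_sum_ln_plus:
  assumes x: "0 < x"
  shows "omega_M M x \<le> (\<Sum>i. ln_plus (x / \<mu> (Suc i)))"
proof -
  have "(SUP k. x ^ k * M 0 / M k) \<le> exp (\<Sum>i. ln_plus (x / \<mu> (Suc i)))"
    using power_div_M_le[OF x] by (intro cSUP_least) (simp_all add: M_0)
  then have "ln (SUP k. x ^ k * M 0 / M k) \<le> ln (exp (\<Sum>i. ln_plus (x / \<mu> (Suc i))))"
    using one_le_omega_sup[of x] x by (subst ln_le_cancel_iff) auto
  then show ?thesis by (simp add: omega_M_def)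
qed

lemma omega_M_mono:
  assumes "0 \<le> x" "x \<le> y"
  shows "omega_M M x \<le> omega_M M y"
proof -
  have "(SUP k. x ^ k * M 0 / M k) \<le> (SUP k. y ^ k * M 0 / M k)"
  proof (rule cSUP_mono)
    show "bdd_above (range (\<lambda>k. y ^ k * M 0 / M k))" using assms by (intro bdd_above_omega_terms) simp
    show "\<exists>m\<in>UNIV. x ^ n * M 0 / M n \<le> y ^ m * M 0 / M m" for n
      using assms M_pos[of n] by (intro bexI[of _ n] divide_right_mono mult_right_mono power_mono) (auto simp: M_0)
  qed simp
  then show ?thesis
    unfolding omega_M_def using one_le_omega_sup[of x] one_le_omega_sup[of y] assms
    by (subst ln_le_cancel_iff) auto
qed

lemma omega_tilde_nonneg: "0 \<le> x \<Longrightarrow> 0 \<le> omega_tilde M x"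
  unfolding omega_tilde_def using omega_M_nonneg[of x] by simp

lemma mono_on_omega_tilde: "mono_on {0..} (omega_tilde M)"
proof (rule mono_onI)
  fix x y :: real assume "x \<in> {0..}" "x \<le> y"
  then have "ln (1 + x\<^sup>2) \<le> ln (1 + y\<^sup>2)"
    using power_mono[of x y 2] by (subst ln_le_cancel_iff) (auto intro: add_pos_nonneg)
  then show "omega_tilde M x \<le> omega_tilde M y"
    unfolding omega_tilde_def using omega_M_mono \<open>x \<in> {0..}\<close> \<open>x \<le> y\<close> by fastforce
qed

lemma summable_tail_bump:
  assumes r: "0 < r"
  shows "summable (\<lambda>i. tail_bump (\<mu> (Suc i) / r) s)"
proof -
  have "filterlim (\<lambda>i. \<mu> (Suc i)) at_top sequentially"
    using mu_tendsto by (simp only: filterlim_sequentially_Suc)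
  then have "eventually (\<lambda>i. r * s + 1 \<le> \<mu> (Suc i)) sequentially"
    by (simp add: filterlim_at_top)
  then have "eventually (\<lambda>i. tail_bump (\<mu> (Suc i) / r) s = 0) sequentially"
    by eventually_elim (use r in \<open>simp add: tail_bump_def field_simps\<close>)
  then show ?thesis by (subst summable_cong) auto
qed

(* The termwise integrals sum to 2 r * sum M_i / M_(i+1), finite by non-quasianalyticity. *)
lemma integrable_tail_bump_series:
  assumes r: "0 < r"
  shows "integrable lborel (\<lambda>s. \<Sum>i. tail_bump (\<mu> (Suc i) / r) s)"
proof (rule integrable_suminf)
  have a: "0 < \<mu> (Suc i) / r" for i using r mu_pos by simp
  show "integrable lborel (tail_bump (\<mu> (Suc i) / r))" for i
    using has_bochner_integral_tail_bump[OF a] by (simp add: has_bochner_integral_iff)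
  show "AE s in lborel. summable (\<lambda>i. norm (tail_bump (\<mu> (Suc i) / r) s))"
    using summable_tail_bump[OF r] tail_bump_nonneg a by (simp add: less_imp_le)
  have "(\<integral>s. norm (tail_bump (\<mu> (Suc i) / r) s) \<partial>lborel) = 2 * r * (M i / M (Suc i))" for i
    using has_bochner_integral_tail_bump[OF a] tail_bump_nonneg a r
    by (simp add: less_imp_le has_bochner_integral_iff M_quotient)
  then show "summable (\<lambda>i. \<integral>s. norm (tail_bump (\<mu> (Suc i) / r) s) \<partial>lborel)"
    using summable_mult[OF summable_quotient, of "2 * r"] by simp
qed

lemma kappa_integrand_omega_tilde_le:
  assumes r: "0 < r"
  shows "kappa_integrand (omega_tilde M) r s
    \<le> 2 * (\<Sum>i. tail_bump (\<mu> (Suc i) / r) s) + 4 * sqrt (1 + r) * tail_bump 1 s"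
proof (cases "1 \<le> s")
  case True
  have a: "0 < \<mu> (Suc i) / r" for i using r mu_pos by simp
  have rs: "0 < r * s" using r True by simp
  have eq: "r * s / \<mu> (Suc i) = s / (\<mu> (Suc i) / r)" for i using r by simp
  have sum: "summable (\<lambda>i. ln_plus (s / (\<mu> (Suc i) / r)))"
    using summable_ln_plus[OF rs] by (simp only: eq)
  have "omega_M M (r * s) / s\<^sup>2 \<le> (\<Sum>i. ln_plus (s / (\<mu> (Suc i) / r))) / s\<^sup>2"
    using omega_M_le_sum_ln_plus[OF rs] by (simp only: eq divide_right_mono zero_le_power2)
  also have "\<dots> = (\<Sum>i. ln_plus (s / (\<mu> (Suc i) / r)) / s\<^sup>2)"
    by (rule suminf_divide[OF sum, symmetric])
  also have "\<dots> \<le> (\<Sum>i. 2 * tail_bump (\<mu> (Suc i) / r) s)"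
    using sum summable_tail_bump[OF r] ln_plus_div_power2_le_tail_bump[OF a] True
    by (intro suminf_le summable_divide summable_mult) auto
  finally have "omega_M M (r * s) / s\<^sup>2 \<le> 2 * (\<Sum>i. tail_bump (\<mu> (Suc i) / r) s)"
    using summable_tail_bump[OF r] by (simp add: suminf_mult)
  moreover have "ln (1 + (r * s)\<^sup>2) / s\<^sup>2 \<le> 4 * sqrt (1 + r) * tail_bump 1 s"
    by (rule ln_one_plus_power2_le_tail_bump[OF r True])
  ultimately show ?thesis
    using True by (simp add: kappa_integrand_def omega_tilde_def add_divide_distrib)
next
  case False
  have "0 \<le> (\<Sum>i. tail_bump (\<mu> (Suc i) / r) s)"
    using summable_tail_bump[OF r] tail_bump_nonneg r mu_pos by (intro suminf_nonneg) (auto simp: less_imp_le)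
  moreover have "tail_bump 1 s = 0" using False by (simp add: tail_bump_def)
  ultimately show ?thesis using False by (simp add: kappa_integrand_def)
qed

lemma integrable_kappa_integrand_omega_tilde:
  assumes r: "0 < r"
  shows "integrable lborel (kappa_integrand (omega_tilde M) r)"
proof (rule Bochner_Integration.integrable_bound)
  show "integrable lborel
      (\<lambda>s. 2 * (\<Sum>i. tail_bump (\<mu> (Suc i) / r) s) + 4 * sqrt (1 + r) * tail_bump 1 s)"
    using integrable_tail_bump_series[OF r] has_bochner_integral_tail_bump[of 1]
    by (simp add: has_bochner_integral_iff)
  have "kappa_integrand (omega_tilde M) r = kappa_integrand (\<lambda>t. omega_tilde M (max 0 t)) r"
    using r by (auto simp: kappa_integrand_def indicator_def fun_eq_iff)
  moreover have "(\<lambda>t. omega_tilde M (max 0 t)) \<in> borel_measurable borel"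
    by (rule borel_measurable_mono_on_max_0[OF mono_on_omega_tilde])
  ultimately show "kappa_integrand (omega_tilde M) r \<in> borel_measurable lborel"
    unfolding kappa_integrand_def by simp
  show "AE s in lborel. norm (kappa_integrand (omega_tilde M) r s)
      \<le> norm (2 * (\<Sum>i. tail_bump (\<mu> (Suc i) / r) s) + 4 * sqrt (1 + r) * tail_bump 1 s)"
  proof (rule AE_I2)
    fix s
    have "0 \<le> kappa_integrand (omega_tilde M) r s"
      using r by (simp add: kappa_integrand_def indicator_def omega_tilde_nonneg)
    then show "norm (kappa_integrand (omega_tilde M) r s)
        \<le> norm (2 * (\<Sum>i. tail_bump (\<mu> (Suc i) / r) s) + 4 * sqrt (1 + r) * tail_bump 1 s)"
      using kappa_integrand_omega_tilde_le[OF r, of s] by simp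
  qed
qed

lemma weight_fun_omega_tilde: "nonquasianalytic_weight_fun (omega_tilde M)"
proof
  show "\<exists>c. \<forall>t>0. real n * ln t - c \<le> omega_tilde M t" for n
    using omega_M_ge omega_M_le_omega_tilde order_trans by blast
qed (simp_all add: mono_on_omega_tilde omega_tilde_nonneg integrable_kappa_integrand_omega_tilde)

lemma ln_one_plus_power2_le_omega_M: "\<exists>c. \<forall>x\<ge>0. real n * ln (1 + x\<^sup>2) \<le> omega_M M x + c"
proof (intro exI allI impI)
  fix x :: real assume x: "0 \<le> x"
  have "real n * ln (1 + x\<^sup>2) \<le> real n * ln 2 + real (2 * n) * ln x" if "1 \<le> x"
  proof -
    have "ln (1 + x\<^sup>2) \<le> ln (2 * x\<^sup>2)"
      using that by (subst ln_le_cancel_iff) (auto intro: add_pos_nonneg)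
    also have "\<dots> = ln 2 + 2 * ln x" using that by (simp add: ln_mult ln_realpow)
    finally have "real n * ln (1 + x\<^sup>2) \<le> real n * (ln 2 + 2 * ln x)" by (rule mult_left_mono) simp
    then show ?thesis by (simp add: algebra_simps)
  qed
  moreover have "real n * ln (1 + x\<^sup>2) \<le> real n * ln 2" if "x < 1"
  proof -
    have "ln (1 + x\<^sup>2) \<le> ln 2"
      using that x power_le_one[of x 2] by (subst ln_le_cancel_iff) (auto intro: add_pos_nonneg)
    then show ?thesis by (rule mult_left_mono) simp
  qed
  ultimately show "real n * ln (1 + x\<^sup>2) \<le> omega_M M x + (real n * ln 2 + ln (M (2 * n)))"
    using omega_M_ge[of x "2 * n"] omega_M_nonneg[OF x] ln_ge_zero[OF M_ge_one[of "2 * n"]] x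
    by (cases "1 \<le> x") (auto simp del: of_nat_mult)
qed

end

section \<open>Weight matrices of moderate growth\<close>

(* M_(2j) <= C^(2j) N_j^2, so each term x^j / N_j of the supremum defining omega_N x is at most
   the square root of the term (C x)^(2j) / M_(2j) for omega_M (C x). *)
lemma omega_M_double:
  assumes M: "nonquasianalytic_weight_seq M \<mu>" and N: "nonquasianalytic_weight_seq N \<nu>" and C: "0 \<le> C"
    and growth: "\<And>j k. M (j + k) \<le> C ^ (j + k) * N j * N k" and x: "0 \<le> x"
  shows "2 * omega_M N x \<le> omega_M M (C * x)"
proof -
  interpret M: nonquasianalytic_weight_seq M \<mu> by (fact M)
  interpret N: nonquasianalytic_weight_seq N \<nu> by (fact N)
  define E where "E = (SUP k. (C * x) ^ k * M 0 / M k)"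
  have Cx: "0 \<le> C * x" using C x by simp
  have E: "1 \<le> E" unfolding E_def by (rule M.one_le_omega_sup[OF Cx])
  have "(SUP k. x ^ k * N 0 / N k) \<le> sqrt E"
  proof (rule cSUP_least)
    fix j
    have "(C * x) ^ (j + j) / M (j + j) \<le> E"
      unfolding E_def using cSUP_upper[OF UNIV_I M.bdd_above_omega_terms[OF Cx], of "j + j"] by (simp add: M.M_0)
    moreover have "(x ^ j / N j)\<^sup>2 \<le> (C * x) ^ (j + j) / M (j + j)"
    proof -
      have "x ^ (j + j) * M (j + j) \<le> x ^ (j + j) * (C ^ (j + j) * (N j)\<^sup>2)"
        using growth[of j j] x by (intro mult_left_mono) (auto simp: power2_eq_square mult.assoc)
      then show ?thesis using M.M_pos[of "j + j"] N.M_pos[of j]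
        by (simp add: field_simps power_add power2_eq_square)
    qed
    ultimately show "x ^ j * N 0 / N j \<le> sqrt E"
      using real_le_rsqrt by (simp add: N.M_0)
  qed simp
  then have "ln (SUP k. x ^ k * N 0 / N k) \<le> ln (sqrt E)"
    using N.one_le_omega_sup[OF x] E by (subst ln_le_cancel_iff) auto
  also have "\<dots> = ln E / 2" using E by (simp add: ln_sqrt)
  finally show ?thesis unfolding omega_M_def E_def by simp
qed

lemma omega_tilde_compare:
  assumes C: "1 \<le> C" and x: "0 \<le> x"
    and log: "64 * ln (1 + x\<^sup>2) \<le> omega_M M x + c"
    and growth: "64 * omega_M N (x / C) \<le> omega_M M x"
  shows "32 * omega_tilde N (x / C) \<le> omega_tilde M x + c / 2"
proof -
  have "(x / C)\<^sup>2 \<le> x\<^sup>2"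
    using C x by (intro power_mono) (auto simp: divide_le_eq mult_le_cancel_left1 order_trans[of _ x])
  then have "ln (1 + (x / C)\<^sup>2) \<le> ln (1 + x\<^sup>2)"
    by (subst ln_le_cancel_iff) (auto intro: add_pos_nonneg)
  moreover have "0 \<le> ln (1 + x\<^sup>2)" by simp
  ultimately show ?thesis using log growth unfolding omega_tilde_def by argo
qed

lemma weight_matrix_member:
  assumes "weight_matrix MM" "nonquasianalytic_matrix MM" "0 < \<alpha>"
  shows "\<exists>\<mu>. nonquasianalytic_weight_seq (MM \<alpha>) \<mu>"
proof -
  obtain \<mu> where "\<mu> 0 = 1" "mono \<mu>" "filterlim \<mu> at_top sequentially" "\<forall>k. MM \<alpha> k = (\<Prod>i\<le>k. \<mu> i)"
    using assms unfolding weight_matrix_def weight_seq_def by blast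
  moreover have "summable (\<lambda>k. MM \<alpha> k / MM \<alpha> (Suc k))"
    using assms unfolding nonquasianalytic_matrix_def nonquasianalytic_seq_def by blast
  ultimately have "nonquasianalytic_weight_seq (MM \<alpha>) \<mu>" by unfold_locales auto
  then show ?thesis by blast
qed

lemma weight_matrix_weight_fun:
  "weight_matrix MM \<Longrightarrow> nonquasianalytic_matrix MM \<Longrightarrow> 0 < \<alpha> \<Longrightarrow>
    nonquasianalytic_weight_fun (omega_tilde (MM \<alpha>))"
  using weight_matrix_member nonquasianalytic_weight_seq.weight_fun_omega_tilde by blast

lemma moderate_growth_omega_M_iterate:
  assumes wm: "weight_matrix MM" and nq: "nonquasianalytic_matrix MM"
    and mg: "R_moderate_growth MM" and \<alpha>: "0 < \<alpha>"
  shows "\<exists>\<beta>>0. \<exists>C\<ge>1. \<forall>x\<ge>0. 2 ^ n * omega_M (MM \<beta>) x \<le> omega_M (MM \<alpha>) (C * x)"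
proof (induction n)
  case 0
  show ?case using \<alpha> by (intro exI[of _ \<alpha>] conjI exI[of _ 1]) auto
next
  case (Suc n)
  then obtain \<beta> C where \<beta>: "0 < \<beta>" "1 \<le> C"
    and IH: "\<And>x. 0 \<le> x \<Longrightarrow> 2 ^ n * omega_M (MM \<beta>) x \<le> omega_M (MM \<alpha>) (C * x)"
    by blast
  obtain \<gamma> C' where \<gamma>: "0 < \<gamma>" "1 \<le> C'"
    and growth: "\<And>j k. MM \<beta> (j + k) \<le> C' ^ (j + k) * MM \<gamma> j * MM \<gamma> k"
    using mg \<beta>(1) unfolding R_moderate_growth_def by blast
  obtain \<mu> \<nu> where "nonquasianalytic_weight_seq (MM \<beta>) \<mu>" "nonquasianalytic_weight_seq (MM \<gamma>) \<nu>"
    using weight_matrix_member[OF wm nq] \<beta>(1) \<gamma>(1) by metis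
  from omega_M_double[OF this, of C'] growth \<gamma>(2)
  have double: "\<And>x. 0 \<le> x \<Longrightarrow> 2 * omega_M (MM \<gamma>) x \<le> omega_M (MM \<beta>) (C' * x)" by simp
  have "2 ^ Suc n * omega_M (MM \<gamma>) x \<le> omega_M (MM \<alpha>) ((C * C') * x)" if x: "0 \<le> x" for x
  proof -
    have "2 ^ Suc n * omega_M (MM \<gamma>) x \<le> 2 ^ n * omega_M (MM \<beta>) (C' * x)"
      using double[OF x] by simp
    also have "\<dots> \<le> omega_M (MM \<alpha>) (C * (C' * x))" using IH \<gamma>(2) x by simp
    finally show ?thesis by (simp add: mult.assoc)
  qed
  moreover have "1 \<le> C * C'" using \<beta>(2) \<gamma>(2) by (metis mult_mono' mult_1 zero_le_one)
  ultimately show ?case using \<gamma>(1) by blast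
qed

lemma K_family_eq: "K_family MM \<alpha> = K_seq (omega_tilde (MM \<alpha>))"
  by (simp add: fun_eq_iff K_family_def K_seq_def)

lemma Q_family_eq: "Q_family MM \<alpha> = Q_seq (omega_tilde (MM \<alpha>))"
  by (simp add: fun_eq_iff Q_family_def Q_seq_def poisson_term_def)

(* Six doublings give the factor 64 needed by omega_tilde_compare, which yields the factor 32
   required by poisson_term_le_K_seq. *)
lemma poisson_term_le_K_family:
  assumes wm: "weight_matrix MM" and nq: "nonquasianalytic_matrix MM"
    and mg: "R_moderate_growth MM" and \<alpha>: "0 < \<alpha>"
  shows "\<exists>\<beta>>0. \<exists>D>0. \<exists>C>0. \<forall>k r. 0 < r \<longrightarrow>
    poisson_term (omega_tilde (MM \<alpha>)) k r \<le> D * C ^ k * K_family MM \<beta> k"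
proof -
  obtain \<beta> C where \<beta>: "0 < \<beta>" and C: "1 \<le> C"
    and growth: "\<And>x. 0 \<le> x \<Longrightarrow> 2 ^ 6 * omega_M (MM \<beta>) x \<le> omega_M (MM \<alpha>) (C * x)"
    using moderate_growth_omega_M_iterate[OF wm nq mg \<alpha>, of 6] by blast
  obtain \<mu> where "nonquasianalytic_weight_seq (MM \<alpha>) \<mu>" using weight_matrix_member[OF wm nq \<alpha>] by blast
  then obtain c where log: "\<And>x. 0 \<le> x \<Longrightarrow> real 64 * ln (1 + x\<^sup>2) \<le> omega_M (MM \<alpha>) x + c"
    using nonquasianalytic_weight_seq.ln_one_plus_power2_le_omega_M[of "MM \<alpha>" \<mu> 64] by blast
  have "32 * omega_tilde (MM \<beta>) (x / C) \<le> omega_tilde (MM \<alpha>) x + c / 2" if "0 \<le> x" for x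
    using omega_tilde_compare[OF C that] log[OF that] growth[of "x / C"] that C by simp
  then have "32 * kappa (omega_tilde (MM \<beta>)) (r / C) - c / 2 \<le> kappa (omega_tilde (MM \<alpha>)) r" if "0 < r" for r
    using kappa_compare weight_matrix_weight_fun[OF wm nq] \<alpha> \<beta> C that by simp
  moreover have "0 < C" using C by simp
  ultimately obtain D where "0 < D"
    and "\<forall>k r. 0 < r \<longrightarrow> poisson_term (omega_tilde (MM \<alpha>)) k r \<le> D * C ^ k * K_family MM \<beta> k"
    using poisson_term_le_K_seq[OF weight_matrix_weight_fun[OF wm nq \<alpha>] weight_matrix_weight_fun[OF wm nq \<beta>]]
    unfolding K_family_eq by blast
  then show ?thesis using \<beta> \<open>0 < C\<close> by blast
qed

lemma seq_preceqI:
  fixes F G :: "nat \<Rightarrow> real"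
  assumes F: "\<And>k. 0 < F k" and G: "\<And>k. 0 < G k" and D: "0 < D" and C: "0 < C"
    and le: "\<And>k. F k \<le> D * C ^ k * G k"
  shows "seq_preceq F G"
  unfolding seq_preceq_def
proof (rule bdd_aboveI2)
  fix k :: nat assume "k \<in> {1..}"
  then have k: "1 \<le> k" by simp
  have "(F k / G k) powr (1 / real k) \<le> (max D 1 * C ^ k) powr (1 / real k)"
    using le[of k] F[of k] G[of k] D C by (intro powr_mono2) (auto simp: divide_le_eq intro: order_trans mult_right_mono)
  also have "\<dots> = max D 1 powr (1 / real k) * C"
    using C k by (simp add: powr_mult powr_realpow[symmetric] powr_powr)
  also have "\<dots> \<le> max D 1 powr 1 * C"
    using C k by (intro mult_right_mono powr_mono) auto
  finally show "(F k / G k) powr (1 / real k) \<le> max D 1 * C" by simp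
qed

lemma K_family_preceq_Q_family:
  assumes wm: "weight_matrix MM" and nq: "nonquasianalytic_matrix MM"
    and mg: "R_moderate_growth MM" and \<alpha>: "0 < \<alpha>"
  shows "seq_preceq (K_family MM \<alpha>) (Q_family MM \<alpha>)"
proof -
  interpret nonquasianalytic_weight_fun "omega_tilde (MM \<alpha>)"
    using weight_matrix_weight_fun[OF wm nq \<alpha>] .
  obtain \<beta> D C where "\<forall>k r. 0 < r \<longrightarrow> poisson_term (omega_tilde (MM \<alpha>)) k r \<le> D * C ^ k * K_family MM \<beta> k"
    using poisson_term_le_K_family[OF wm nq mg \<alpha>] by blast
  then have bdd: "bdd_above (poisson_term (omega_tilde (MM \<alpha>)) k ` {0<..})" for k
    by (intro bdd_aboveI2[where M="D * C ^ k * K_family MM \<beta> k"]) auto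
  show ?thesis unfolding K_family_eq Q_family_eq
    using Q_seq_pos[OF bdd] K_seq_le_Q_seq[OF bdd]
    by (intro seq_preceqI[where D="exp (kappa (omega_tilde (MM \<alpha>)) 1)" and C=1]) (auto simp: K_seq_def)
qed

lemma Q_family_preceq_K_family:
  assumes wm: "weight_matrix MM" and nq: "nonquasianalytic_matrix MM"
    and mg: "R_moderate_growth MM" and \<alpha>: "0 < \<alpha>"
  shows "\<exists>\<beta>>0. seq_preceq (Q_family MM \<alpha>) (K_family MM \<beta>)"
proof -
  interpret nonquasianalytic_weight_fun "omega_tilde (MM \<alpha>)"
    using weight_matrix_weight_fun[OF wm nq \<alpha>] .
  obtain \<beta> D C where \<beta>: "0 < \<beta>" and D: "0 < D" and C: "0 < C"
    and le: "\<And>k r. 0 < r \<Longrightarrow> poisson_term (omega_tilde (MM \<alpha>)) k r \<le> D * C ^ k * K_family MM \<beta> k"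
    using poisson_term_le_K_family[OF wm nq mg \<alpha>] by blast
  then have bdd: "bdd_above (poisson_term (omega_tilde (MM \<alpha>)) k ` {0<..})" for k
    by (intro bdd_aboveI2[where M="D * C ^ k * K_family MM \<beta> k"]) auto
  have "seq_preceq (Q_family MM \<alpha>) (K_family MM \<beta>)"
    unfolding Q_family_eq
    using Q_seq_pos[OF bdd] D C Q_seq_le[OF le]
    by (intro seq_preceqI[where D=D and C=C]) (auto simp: K_family_def)
  then show ?thesis using \<beta> by blast
qed

theorem proposition3p4:
  fixes MM :: "real \<Rightarrow> nat \<Rightarrow> real"
  assumes "weight_matrix MM"
    and "nonquasianalytic_matrix MM"
    and "R_moderate_growth MM"
  shows "R_equivalent (K_family MM) (Q_family MM)"
  unfolding R_equivalent_def
  using K_family_preceq_Q_family[OF assms] Q_family_preceq_K_family[OF assms] by blast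

end
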